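(* Let $f\in C[0,1]$ satisfy $f(x)\neq0$ for all $x\in[0,1]$. Then for every $n\in\mathbb{N}$, $\overline{\dim}_B G(f^n)=\overline{\dim}_B G(f)$, $\underline{\dim}_B G(f^n)=\underline{\dim}_B G(f)$, $\dim_P G(f^n)=\dim_P G(f)$, $\dim_H G(f^n)=\dim_H G(f)$, and $\dim_A G(f^n)=\dim_A G(f)$.
   Context: $C[0,1]$ is the space of real-valued continuous functions on $[0,1]$; $G(f)=\{(x,f(x)):x\in[0,1]\}\subset\mathbb{R}^2$ is the graph of $f$, and $f^n$ is the pointwise $n$-th power. $\overline{\dim}_B$, $\underline{\dim}_B$, $\dim_P$, $\dim_H$, $\dim_A$ denote the upper box-counting, lower box-counting, packing, Hausdorff and Assouad dimensions of subsets of $\mathbb{R}^2$ (with the Euclidean metric). *)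

theory Defs
  imports "HOL-Analysis.Analysis"
begin

type_synonym pt = "real \<times> real"
(* real \<times> real carries the Euclidean metric: dist (a,b) (c,d) = sqrt((a-c)^2+(b-d)^2) *)

definition graph :: "(real \<Rightarrow> real) \<Rightarrow> pt set" where
  "graph f = (\<lambda>x. (x, f x)) ` {0..1}"

text \<open>N_delta(F): least number of (bounded) sets of diameter at most delta covering F
  (infinity if no finite cover exists).\<close>
definition cover_num :: "pt set \<Rightarrow> real \<Rightarrow> ereal" where
  "cover_num F \<delta> = Inf {ereal (real (card C)) | C. finite C \<and>
       (\<forall>U\<in>C. bounded U \<and> diameter U \<le> \<delta>) \<and> F \<subseteq> \<Union>C}"

definition upper_box_dim :: "pt set \<Rightarrow> ereal" where
  "upper_box_dim F = Limsup (at_right 0)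
      (\<lambda>\<delta>. ereal (ln (real_of_ereal (cover_num F \<delta>)) / - ln \<delta>))"

definition lower_box_dim :: "pt set \<Rightarrow> ereal" where
  "lower_box_dim F = Liminf (at_right 0)
      (\<lambda>\<delta>. ereal (ln (real_of_ereal (cover_num F \<delta>)) / - ln \<delta>))"

definition hausdorff_content :: "real \<Rightarrow> real \<Rightarrow> pt set \<Rightarrow> ennreal" where
  "hausdorff_content s \<delta> F = (INF A \<in> {A :: nat \<Rightarrow> pt set. F \<subseteq> (\<Union>i. A i) \<and>
        (\<forall>i. bounded (A i) \<and> diameter (A i) \<le> \<delta>)}.
        (\<Sum>i. ennreal (diameter (A i) powr s)))"

definition hausdorff_measure :: "real \<Rightarrow> pt set \<Rightarrow> ennreal" where
  "hausdorff_measure s F = (SUP \<delta> \<in> {0<..}. hausdorff_content s \<delta> F)"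

definition hausdorff_dim :: "pt set \<Rightarrow> ereal" where
  "hausdorff_dim F = Inf (ereal ` {s. s \<ge> 0 \<and> hausdorff_measure s F = 0})"

text \<open>Packing measure and dimension (Falconer, Fractal Geometry, Sect. 3.4):
  packings are finite or countable collections of disjoint closed balls with radii
  at most delta and centres in F; |B| = 2r is the diameter of a ball of radius r.\<close>
definition packing_pre :: "real \<Rightarrow> real \<Rightarrow> pt set \<Rightarrow> ennreal" where
  "packing_pre s \<delta> F = (SUP B \<in> {B :: (pt \<times> real) set. countable B \<and>
        (\<forall>(c,r)\<in>B. c \<in> F \<and> 0 < r \<and> r \<le> \<delta>) \<and>
        (\<forall>p\<in>B. \<forall>q\<in>B. p \<noteq> q \<longrightarrow> cball (fst p) (snd p) \<inter> cball (fst q) (snd q) = {})}.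
        (\<Sum>\<^sub>\<infinity>p\<in>B. ennreal ((2 * snd p) powr s)))"

definition packing_premeasure :: "real \<Rightarrow> pt set \<Rightarrow> ennreal" where
  "packing_premeasure s F = (INF \<delta> \<in> {0<..}. packing_pre s \<delta> F)"

definition packing_measure :: "real \<Rightarrow> pt set \<Rightarrow> ennreal" where
  "packing_measure s F = (INF A \<in> {A :: nat \<Rightarrow> pt set. F \<subseteq> (\<Union>i. A i)}.
        (\<Sum>i. packing_premeasure s (A i)))"

definition packing_dim :: "pt set \<Rightarrow> ereal" where
  "packing_dim F = Inf (ereal ` {s. s \<ge> 0 \<and> packing_measure s F = 0})"

definition assouad_dim :: "pt set \<Rightarrow> ereal" where
  "assouad_dim F = Inf (ereal ` {\<alpha>. \<alpha> \<ge> 0 \<and> (\<exists>C>0. \<forall>r R x. 0 < r \<and> r < R \<and> x \<in> F \<longrightarrow>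
        cover_num (ball x R \<inter> F) r \<le> ereal (C * (R / r) powr \<alpha>))})"

end

theory Submission
  imports Defs
begin

text \<open>Box-counting, Hausdorff and packing dimensions do not increase under Lipschitz maps,
  and the Assouad dimension does not increase under bi-Lipschitz maps; hence all five agree on
  bi-Lipschitz equivalent sets. If the increments of g are comparable with those of f on [0,1],
  then the vertical map (x, f x) \<mapsto> (x, g x) is bi-Lipschitz from G(f) onto G(g). Since f is
  continuous and never zero, its range is a compact interval inside (0, \<infinity>) or (-\<infinity>, 0) whose
  absolute values lie in some [m, M] with m > 0; there y \<mapsto> y^n changes increments by a factor
  between n m^(n-1) and n M^(n-1), so g = f^n qualifies.\<close>

lemma lipschitz_on_max_1: "L-lipschitz_on F g \<Longrightarrow> (max 1 L)-lipschitz_on F g"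
  by (rule lipschitz_on_le) auto

lemma bounded_diameter_lipschitz_image:
  fixes g :: "'a::metric_space \<Rightarrow> 'b::metric_space"
  assumes "L-lipschitz_on F g" "S \<subseteq> F" "bounded S"
  shows "bounded (g ` S) \<and> diameter (g ` S) \<le> L * diameter S"
proof (cases "S = {}")
  case False
  have dist_le: "dist (g p) (g q) \<le> L * diameter S" if "p \<in> S" "q \<in> S" for p q
  proof -
    have "dist (g p) (g q) \<le> L * dist p q"
      using lipschitz_onD[OF assms(1)] that assms(2) by blast
    also have "\<dots> \<le> L * diameter S"
      using diameter_bounded_bound[OF assms(3) that] lipschitz_on_nonneg[OF assms(1)]
      by (rule mult_left_mono)
    finally show ?thesis .
  qed
  obtain a where "a \<in> S" using False by blast
  then have "g ` S \<subseteq> cball (g a) (L * diameter S)" using dist_le by auto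
  then have "bounded (g ` S)" using bounded_cball bounded_subset by blast
  moreover have "diameter (g ` S) \<le> L * diameter S"
    using False dist_le by (auto simp: diameter_def intro!: cSUP_least)
  ultimately show ?thesis ..
qed simp

lemma cover_num_mono: "E \<subseteq> E' \<Longrightarrow> cover_num E \<delta> \<le> cover_num E' \<delta>"
  unfolding cover_num_def by (rule Inf_superset_mono) blast

lemma cover_num_ge_1:
  assumes "F \<noteq> {}"
  shows "1 \<le> cover_num F \<delta>"
  unfolding cover_num_def
proof (rule Inf_greatest, clarify)
  fix C assume "finite C" "F \<subseteq> \<Union>C"
  then have "C \<noteq> {}" using assms by auto
  with \<open>finite C\<close> show "1 \<le> ereal (real (card C))"
    by (simp add: Suc_leI card_gt_0_iff)
qed

lemma cover_num_finite:
  assumes "compact F" "\<delta> > 0"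
  shows "cover_num F \<delta> < \<infinity>"
proof -
  obtain S where S: "finite S" "F \<subseteq> (\<Union>x\<in>S. ball x (\<delta>/2))"
    by (rule compactE_image[OF assms(1), of F "\<lambda>x. ball x (\<delta>/2)"]) (use assms in auto)
  have "\<forall>U \<in> (\<lambda>x. ball x (\<delta>/2)) ` S. bounded U \<and> diameter U \<le> \<delta>"
    using assms(2) by auto
  then have "cover_num F \<delta> \<le> ereal (real (card ((\<lambda>x. ball x (\<delta>/2)) ` S)))"
    unfolding cover_num_def using S by (intro Inf_lower) blast
  then show ?thesis by (rule le_less_trans) simp
qed

lemma cover_num_lipschitz_image:
  assumes "L-lipschitz_on F g" "E \<subseteq> F"
  shows "cover_num (g ` E) (L * \<delta>) \<le> cover_num E \<delta>"
  unfolding cover_num_def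
proof (rule Inf_greatest, clarify)
  fix C assume C: "finite C" "\<forall>U\<in>C. bounded U \<and> diameter U \<le> \<delta>" "E \<subseteq> \<Union>C"
  define C' where "C' = (\<lambda>U. g ` (U \<inter> E)) ` C"
  have "\<forall>V\<in>C'. bounded V \<and> diameter V \<le> L * \<delta>"
  proof
    fix V assume "V \<in> C'"
    then obtain U where U: "U \<in> C" "V = g ` (U \<inter> E)" unfolding C'_def by blast
    have UE: "bounded (U \<inter> E)" "diameter (U \<inter> E) \<le> \<delta>"
      using C(2) U(1) bounded_subset diameter_subset[of "U \<inter> E" U] by force+
    have "bounded V" "diameter V \<le> L * diameter (U \<inter> E)"
      using bounded_diameter_lipschitz_image[OF assms(1) _ UE(1)] assms(2) U(2) by auto
    moreover have "L * diameter (U \<inter> E) \<le> L * \<delta>"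
      using UE(2) lipschitz_on_nonneg[OF assms(1)] by (rule mult_left_mono)
    ultimately show "bounded V \<and> diameter V \<le> L * \<delta>" by simp
  qed
  moreover have "finite C'" "g ` E \<subseteq> \<Union>C'" using C unfolding C'_def by blast+
  ultimately have "Inf {ereal (real (card C)) |C. finite C \<and> (\<forall>U\<in>C. bounded U \<and> diameter U \<le> L * \<delta>)
      \<and> g ` E \<subseteq> \<Union>C} \<le> ereal (real (card C'))"
    by (intro Inf_lower) blast
  also have "\<dots> \<le> ereal (real (card C))"
    unfolding C'_def using card_image_le[OF C(1)] by simp
  finally show "Inf {ereal (real (card C)) |C. finite C \<and> (\<forall>U\<in>C. bounded U \<and> diameter U \<le> L * \<delta>)
      \<and> g ` E \<subseteq> \<Union>C} \<le> ereal (real (card C))" .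
qed

definition box_ratio :: "pt set \<Rightarrow> real \<Rightarrow> ereal" where
  "box_ratio F \<delta> = ereal (ln (real_of_ereal (cover_num F \<delta>)) / - ln \<delta>)"

lemma divide_neg_ln_le_rescaled:
  fixes A B \<delta> L e :: real
  assumes "0 \<le> A" "A \<le> B" "0 < \<delta>" "\<delta> < 1" "1 \<le> L" "ln L \<le> e * - ln \<delta>"
  shows "A / - ln \<delta> \<le> (1 + e) * (B / - ln (\<delta> / L))"
proof -
  define t where "t = - ln \<delta>"
  define u where "u = ln L"
  have t: "0 < t" and u: "0 \<le> u" using assms(3-5) unfolding t_def u_def by auto
  have "B * u \<le> B * (e * t)" using assms(1,2,6) unfolding t_def u_def by (intro mult_left_mono) auto
  then have "B * (t + u) \<le> (1 + e) * B * t" by (simp add: algebra_simps)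
  then have "B / t \<le> (1 + e) * (B / (t + u))" using t u by (simp add: field_simps add_pos_nonneg)
  moreover have "A / t \<le> B / t" using assms(2) t by (simp add: divide_right_mono)
  moreover have "- ln (\<delta> / L) = t + u" using assms(3,5) unfolding t_def u_def by (simp add: ln_div)
  ultimately show ?thesis unfolding t_def by simp
qed

text \<open>Compactness keeps the covering numbers finite, so that real_of_ereal in box_ratio
  never produces its junk value 0.\<close>
lemma box_ratio_lipschitz_image_le:
  assumes "compact F" "F \<noteq> {}" "L-lipschitz_on F g" "1 \<le> L" "e > 0"
  shows "\<forall>\<^sub>F \<delta> in at_right 0. box_ratio (g ` F) \<delta> \<le> ereal (1 + e) * box_ratio F (\<delta> / L)"
proof -
  have "\<forall>\<^sub>F \<delta> in at_right 0. 0 < \<delta> \<and> \<delta> < min 1 (exp (- ln L / e))"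
    unfolding eventually_at_right_field by (intro exI[of _ "min 1 (exp (- ln L / e))"]) auto
  then show ?thesis
  proof (rule eventually_mono, elim conjE)
    fix \<delta> :: real assume \<delta>: "0 < \<delta>" "\<delta> < min 1 (exp (- ln L / e))"
    have "ln \<delta> < - ln L / e" using \<delta> by (metis ln_exp ln_less_cancel_iff exp_gt_zero min.strict_boundedE)
    then have small: "ln L \<le> e * - ln \<delta>" using assms(5) by (simp add: field_simps)
    have fin: "cover_num F (\<delta> / L) < \<infinity>"
      using cover_num_finite[OF assms(1)] \<delta>(1) assms(4) by simp
    have le: "cover_num (g ` F) \<delta> \<le> cover_num F (\<delta> / L)"
      using cover_num_lipschitz_image[OF assms(3) order_refl, of "\<delta> / L"] assms(4) by simp
    have ge_1: "1 \<le> cover_num (g ` F) \<delta>" using assms(2) by (intro cover_num_ge_1) simp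
    define a where "a = real_of_ereal (cover_num (g ` F) \<delta>)"
    define b where "b = real_of_ereal (cover_num F (\<delta> / L))"
    have "1 \<le> a" unfolding a_def
      using real_of_ereal_positive_mono[of 1 "cover_num (g ` F) \<delta>"] ge_1 le fin by force
    moreover have "a \<le> b" unfolding a_def b_def
      using real_of_ereal_positive_mono[OF _ le] ge_1 fin by (simp add: order.trans[OF _ ge_1])
    ultimately have "ln a / - ln \<delta> \<le> (1 + e) * (ln b / - ln (\<delta> / L))"
      using \<delta> assms(4) small by (intro divide_neg_ln_le_rescaled) auto
    then show "box_ratio (g ` F) \<delta> \<le> ereal (1 + e) * box_ratio F (\<delta> / L)"
      unfolding box_ratio_def a_def[symmetric] b_def[symmetric] by simp
  qed
qed

lemma ereal_le_epsilon_mult: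
  fixes U V :: ereal
  assumes "\<And>e. e > 0 \<Longrightarrow> U \<le> ereal (1 + e) * V"
  shows "U \<le> V"
proof (cases V)
  case (real v)
  show ?thesis
  proof (cases "v \<le> 0")
    case True
    have "U \<le> ereal 2 * V" using assms[of 1] by simp
    also have "\<dots> \<le> V" using True real by simp
    finally show ?thesis .
  next
    case False
    show ?thesis
    proof (rule ereal_le_epsilon2)
      fix e :: real assume "e > 0"
      have "U \<le> ereal (1 + e / v) * V" using assms[of "e / v"] False \<open>e > 0\<close> by simp
      also have "\<dots> = V + ereal e" using real False by (simp add: field_simps)
      finally show "U \<le> V + ereal e" .
    qed
  qed
next
  case MInf
  then show ?thesis using assms[of 1] by simp
qed simp

lemma
  fixes h :: "real \<Rightarrow> ereal"
  assumes "c > 0"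
  shows Limsup_at_right_0_rescale: "Limsup (at_right 0) (\<lambda>\<delta>. h (\<delta> / c)) = Limsup (at_right 0) h"
    and Liminf_at_right_0_rescale: "Liminf (at_right 0) (\<lambda>\<delta>. h (\<delta> / c)) = Liminf (at_right 0) h"
proof -
  have inj: "inj ((*) (1 / c))" using assms by (intro injI) simp
  have "filtermap ((*) (1 / c)) (at_right 0) = at_right (0::real)"
    using filtermap_times_pos_at_right[of "1 / c" 0] assms by simp
  then show "Limsup (at_right 0) (\<lambda>\<delta>. h (\<delta> / c)) = Limsup (at_right 0) h"
    and "Liminf (at_right 0) (\<lambda>\<delta>. h (\<delta> / c)) = Liminf (at_right 0) h"
    using Limsup_filtermap_eq[OF inj, of "at_right 0" h] Liminf_filtermap_eq[OF inj, of "at_right 0" h]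
    by simp_all
qed

lemma Limsup_Liminf_at_right_0_le_rescaled:
  fixes h k :: "real \<Rightarrow> ereal"
  assumes "c > 0" "\<And>e. e > 0 \<Longrightarrow> \<forall>\<^sub>F \<delta> in at_right 0. h \<delta> \<le> ereal (1 + e) * k (\<delta> / c)"
  shows "Limsup (at_right 0) h \<le> Limsup (at_right 0) k \<and> Liminf (at_right 0) h \<le> Liminf (at_right 0) k"
proof
  show "Limsup (at_right 0) h \<le> Limsup (at_right 0) k"
  proof (rule ereal_le_epsilon_mult)
    fix e :: real assume "e > 0"
    have "Limsup (at_right 0) h \<le> Limsup (at_right 0) (\<lambda>\<delta>. ereal (1 + e) * k (\<delta> / c))"
      using assms(2)[OF \<open>e > 0\<close>] by (rule Limsup_mono)
    also have "\<dots> = ereal (1 + e) * Limsup (at_right 0) k"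
      using \<open>e > 0\<close> assms(1) by (simp add: Limsup_ereal_mult_left Limsup_at_right_0_rescale)
    finally show "Limsup (at_right 0) h \<le> ereal (1 + e) * Limsup (at_right 0) k" .
  qed
  show "Liminf (at_right 0) h \<le> Liminf (at_right 0) k"
  proof (rule ereal_le_epsilon_mult)
    fix e :: real assume "e > 0"
    have "Liminf (at_right 0) h \<le> Liminf (at_right 0) (\<lambda>\<delta>. ereal (1 + e) * k (\<delta> / c))"
      using assms(2)[OF \<open>e > 0\<close>] by (rule Liminf_mono)
    also have "\<dots> = ereal (1 + e) * Liminf (at_right 0) k"
      using \<open>e > 0\<close> assms(1) by (simp add: Liminf_ereal_mult_left Liminf_at_right_0_rescale)
    finally show "Liminf (at_right 0) h \<le> ereal (1 + e) * Liminf (at_right 0) k" .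
  qed
qed

lemma box_dims_lipschitz_image_le:
  assumes "compact F" "L-lipschitz_on F g"
  shows "upper_box_dim (g ` F) \<le> upper_box_dim F \<and> lower_box_dim (g ` F) \<le> lower_box_dim F"
proof (cases "F = {}")
  case False
  have "(max 1 L)-lipschitz_on F g" using assms(2) by (rule lipschitz_on_max_1)
  then have "Limsup (at_right 0) (box_ratio (g ` F)) \<le> Limsup (at_right 0) (box_ratio F)
      \<and> Liminf (at_right 0) (box_ratio (g ` F)) \<le> Liminf (at_right 0) (box_ratio F)"
    using box_ratio_lipschitz_image_le[OF assms(1) False]
    by (intro Limsup_Liminf_at_right_0_le_rescaled[of "max 1 L"]) auto
  then show ?thesis
    unfolding upper_box_dim_def lower_box_dim_def box_ratio_def .
qed simp

lemma INF_le_cmult_INF: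
  fixes u :: "'a \<Rightarrow> ennreal" and v :: "'b \<Rightarrow> ennreal"
  assumes "\<And>a. a \<in> A \<Longrightarrow> \<exists>b\<in>B. v b \<le> ennreal k * u a" "k > 0"
  shows "(INF b\<in>B. v b) \<le> ennreal k * (INF a\<in>A. u a)"
proof (cases "(INF a\<in>A. u a) = \<infinity>")
  case True
  then show ?thesis using assms(2) by (simp add: ennreal_mult_top)
next
  case False
  show ?thesis
  proof (rule ennreal_le_epsilon)
    fix e :: real assume e: "0 < e"
    obtain a where a: "a \<in> A" "u a < (INF a\<in>A. u a) + ennreal (e / k)"
      using INF_approx_ennreal[of "e / k" "INF a\<in>A. u a" u A] False e assms(2) by auto
    obtain b where b: "b \<in> B" "v b \<le> ennreal k * u a" using assms(1)[OF a(1)] by blast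
    have "(INF b\<in>B. v b) \<le> ennreal k * u a" using b by (meson INF_lower order_trans)
    also have "\<dots> \<le> ennreal k * ((INF a\<in>A. u a) + ennreal (e / k))"
      using a(2) by (intro mult_left_mono) auto
    also have "\<dots> = ennreal k * (INF a\<in>A. u a) + ennreal e"
      using assms(2) e by (simp add: distrib_left ennreal_mult[symmetric])
    finally show "(INF b\<in>B. v b) \<le> ennreal k * (INF a\<in>A. u a) + ennreal e" .
  qed
qed

lemma hausdorff_content_lipschitz_image:
  assumes "L-lipschitz_on F g" "0 < L" "0 \<le> s"
  shows "hausdorff_content s \<delta> (g ` F) \<le> ennreal (L powr s) * hausdorff_content s (\<delta> / L) F"
  unfolding hausdorff_content_def
proof (rule INF_le_cmult_INF, clarify)
  fix A :: "nat \<Rightarrow> pt set"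
  assume A: "F \<subseteq> (\<Union>i. A i)" "\<forall>i. bounded (A i) \<and> diameter (A i) \<le> \<delta> / L"
  define B where "B i = g ` (A i \<inter> F)" for i
  have B: "bounded (B i) \<and> diameter (B i) \<le> L * diameter (A i)" for i
  proof -
    have AF: "bounded (A i \<inter> F)" "diameter (A i \<inter> F) \<le> diameter (A i)"
      using A(2) by (auto intro: bounded_subset diameter_subset)
    have "bounded (B i)" "diameter (B i) \<le> L * diameter (A i \<inter> F)"
      using bounded_diameter_lipschitz_image[OF assms(1) _ AF(1)] unfolding B_def by auto
    moreover have "L * diameter (A i \<inter> F) \<le> L * diameter (A i)" using AF(2) assms(2) by simp
    ultimately show ?thesis by simp
  qed
  have "g ` F \<subseteq> (\<Union>i. B i)" using A(1) unfolding B_def by blast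
  moreover have "bounded (B i) \<and> diameter (B i) \<le> \<delta>" for i
  proof -
    have "L * diameter (A i) \<le> \<delta>" using A(2) assms(2) by (simp add: le_divide_eq mult.commute)
    then show ?thesis using B[of i] by simp
  qed
  moreover have "(\<Sum>i. ennreal (diameter (B i) powr s))
      \<le> ennreal (L powr s) * (\<Sum>i. ennreal (diameter (A i) powr s))"
  proof -
    have "diameter (B i) powr s \<le> L powr s * diameter (A i) powr s" for i
    proof -
      have "diameter (B i) powr s \<le> (L * diameter (A i)) powr s"
        using B[of i] assms(3) diameter_ge_0[of "B i"] by (intro powr_mono2) auto
      also have "\<dots> = L powr s * diameter (A i) powr s"
        using assms(2) diameter_ge_0[of "A i"] A(2) by (simp add: powr_mult)
      finally show ?thesis .
    qed
    then have "(\<Sum>i. ennreal (diameter (B i) powr s)) \<le> (\<Sum>i. ennreal (L powr s) * ennreal (diameter (A i) powr s))"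
      by (intro suminf_le) (auto simp: ennreal_mult[symmetric] intro: ennreal_leI)
    then show ?thesis by simp
  qed
  ultimately show "\<exists>B\<in>{A. g ` F \<subseteq> (\<Union>i. A i) \<and> (\<forall>i. bounded (A i) \<and> diameter (A i) \<le> \<delta>)}.
      (\<Sum>i. ennreal (diameter (B i) powr s)) \<le> ennreal (L powr s) * (\<Sum>i. ennreal (diameter (A i) powr s))"
    by blast
qed (use assms(2) in simp)

lemma hausdorff_measure_lipschitz_image_null:
  assumes "L-lipschitz_on F g" "0 \<le> s" "hausdorff_measure s F = 0"
  shows "hausdorff_measure s (g ` F) = 0"
proof -
  define L' where "L' = max 1 L"
  have L': "L'-lipschitz_on F g" "0 < L'"
    using lipschitz_on_max_1[OF assms(1)] unfolding L'_def by auto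
  have "hausdorff_content s \<delta> F \<le> hausdorff_measure s F" if "\<delta> > 0" for \<delta>
    unfolding hausdorff_measure_def using that by (intro SUP_upper) auto
  then have "hausdorff_content s \<delta> (g ` F) = 0" if "\<delta> > 0" for \<delta>
    using hausdorff_content_lipschitz_image[OF L' assms(2), of \<delta>] that L'(2) assms(3) by simp
  then show ?thesis unfolding hausdorff_measure_def by (simp add: bot_ennreal)
qed

lemma hausdorff_dim_lipschitz_image_le:
  assumes "L-lipschitz_on F g"
  shows "hausdorff_dim (g ` F) \<le> hausdorff_dim F"
  unfolding hausdorff_dim_def
  by (rule Inf_superset_mono) (use hausdorff_measure_lipschitz_image_null[OF assms] in blast)

definition delta_packing :: "pt set \<Rightarrow> real \<Rightarrow> (pt \<times> real) set \<Rightarrow> bool" where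
  "delta_packing F \<delta> B \<longleftrightarrow> countable B \<and> (\<forall>(c, r)\<in>B. c \<in> F \<and> 0 < r \<and> r \<le> \<delta>) \<and>
     (\<forall>p\<in>B. \<forall>q\<in>B. p \<noteq> q \<longrightarrow> cball (fst p) (snd p) \<inter> cball (fst q) (snd q) = {})"

lemma packing_pre_altdef:
  "packing_pre s \<delta> F = (SUP B \<in> Collect (delta_packing F \<delta>). \<Sum>\<^sub>\<infinity>p\<in>B. ennreal ((2 * snd p) powr s))"
  unfolding packing_pre_def delta_packing_def by simp

lemma cball_inter_cball_nonempty:
  fixes c c' :: "'a::real_normed_vector"
  assumes "dist c c' \<le> r + r'" "0 \<le> r" "0 \<le> r'"
  shows "cball c r \<inter> cball c' r' \<noteq> {}"
proof (cases "r + r' = 0")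
  case True
  then have "c \<in> cball c r \<inter> cball c' r'" using assms by auto
  then show ?thesis by blast
next
  case False
  then have pos: "r + r' > 0" using assms by simp
  define t where "t = r / (r + r')"
  define z where "z = c + t *\<^sub>R (c' - c)"
  have t: "0 \<le> t" "t \<le> 1" "1 - t = r' / (r + r')"
    using pos assms unfolding t_def by (auto simp: field_simps)
  have "dist c z = t * dist c c'" unfolding z_def dist_norm using t by (simp add: norm_minus_commute)
  also have "\<dots> \<le> t * (r + r')" using assms t by (intro mult_left_mono) auto
  also have "\<dots> = r" using pos unfolding t_def by simp
  finally have "z \<in> cball c r" by simp
  have "c' - z = (1 - t) *\<^sub>R (c' - c)" unfolding z_def by (simp add: algebra_simps)
  then have "dist c' z = (1 - t) * dist c c'" using t(1,2) by (simp add: dist_norm norm_minus_commute)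
  also have "\<dots> \<le> (1 - t) * (r + r')" using assms t by (intro mult_left_mono) auto
  also have "\<dots> = r'" using pos t(3) by simp
  finally have "z \<in> cball c' r'" by simp
  with \<open>z \<in> cball c r\<close> show ?thesis by blast
qed

lemma delta_packing_lipschitz_preimage:
  assumes "L-lipschitz_on E g" "0 < L" "delta_packing (g ` E) \<delta> B"
  defines "\<phi> \<equiv> \<lambda>p. (inv_into E g (fst p), snd p / L)"
  shows "inj_on \<phi> B" and "delta_packing E (\<delta> / L) (\<phi> ` B)"
proof -
  have B: "countable B" "\<And>p. p \<in> B \<Longrightarrow> fst p \<in> g ` E \<and> 0 < snd p \<and> snd p \<le> \<delta>"
    "\<And>p q. p \<in> B \<Longrightarrow> q \<in> B \<Longrightarrow> p \<noteq> q \<Longrightarrow> cball (fst p) (snd p) \<inter> cball (fst q) (snd q) = {}"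
    using assms(3) unfolding delta_packing_def by auto
  have g_inv: "g (fst (\<phi> p)) = fst p" "fst (\<phi> p) \<in> E" if "p \<in> B" for p
    using B(2)[OF that] unfolding \<phi>_def by (auto simp: f_inv_into_f inv_into_into)
  show "inj_on \<phi> B"
  proof (rule inj_onI)
    fix p q assume pq: "p \<in> B" "q \<in> B" "\<phi> p = \<phi> q"
    then have "fst p = fst q" using g_inv(1) by metis
    moreover have "snd p = snd q" using pq(3) assms(2) unfolding \<phi>_def by simp
    ultimately show "p = q" by (simp add: prod_eq_iff)
  qed
  have "cball (fst (\<phi> p)) (snd (\<phi> p)) \<inter> cball (fst (\<phi> q)) (snd (\<phi> q)) = {}"
    if pq: "p \<in> B" "q \<in> B" "p \<noteq> q" for p q
  proof (rule disjoint_cballI, rule ccontr)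
    assume "\<not> snd (\<phi> p) + snd (\<phi> q) < dist (fst (\<phi> p)) (fst (\<phi> q))"
    then have "L * dist (fst (\<phi> p)) (fst (\<phi> q)) \<le> snd p + snd q"
      using assms(2) unfolding \<phi>_def by (simp add: field_simps)
    moreover have "dist (fst p) (fst q) \<le> L * dist (fst (\<phi> p)) (fst (\<phi> q))"
      using lipschitz_onD[OF assms(1) g_inv(2)[OF pq(1)] g_inv(2)[OF pq(2)]] g_inv(1) pq by simp
    ultimately have "cball (fst p) (snd p) \<inter> cball (fst q) (snd q) \<noteq> {}"
      using B(2) pq by (intro cball_inter_cball_nonempty) (auto simp: less_imp_le)
    then show False using B(3)[OF pq] by simp
  qed
  moreover have "fst (\<phi> p) \<in> E \<and> 0 < snd (\<phi> p) \<and> snd (\<phi> p) \<le> \<delta> / L" if "p \<in> B" for p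
    using g_inv(2)[OF that] B(2)[OF that] assms(2) unfolding \<phi>_def by (auto intro: divide_right_mono)
  ultimately show "delta_packing E (\<delta> / L) (\<phi> ` B)"
    using B(1) unfolding delta_packing_def by (simp add: case_prod_beta) blast
qed

lemma infsum_cmult_right_ennreal:
  fixes f :: "'a \<Rightarrow> ennreal"
  assumes "c < top"
  shows "(\<Sum>\<^sub>\<infinity>x\<in>A. c * f x) = c * (\<Sum>\<^sub>\<infinity>x\<in>A. f x)"
proof (rule infsumI)
  have "(sum f \<longlongrightarrow> infsum f A) (finite_subsets_at_top A)"
    using has_sum_infsum[of f A] unfolding has_sum_def by (simp add: nonneg_summable_on_complete)
  then have "((\<lambda>X. c * sum f X) \<longlongrightarrow> c * infsum f A) (finite_subsets_at_top A)"
    by (rule ennreal_tendsto_cmult[OF assms])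
  then show "((\<lambda>x. c * f x) has_sum c * infsum f A) A"
    unfolding has_sum_def by (simp add: sum_distrib_left)
qed

lemma packing_pre_lipschitz_image:
  assumes "L-lipschitz_on E g" "0 < L"
  shows "packing_pre s \<delta> (g ` E) \<le> ennreal (L powr s) * packing_pre s (\<delta> / L) E"
  unfolding packing_pre_altdef
proof (rule SUP_least, clarsimp)
  fix B assume B: "delta_packing (g ` E) \<delta> B"
  define \<phi> where "\<phi> p = (inv_into E g (fst p), snd p / L)" for p :: "pt \<times> real"
  note preimage = delta_packing_lipschitz_preimage[OF assms B, folded \<phi>_def]
  define w where "w p = ennreal ((2 * snd p) powr s)" for p :: "pt \<times> real"
  have scale: "w p = ennreal (L powr s) * w (\<phi> p)" for p
  proof -
    have "2 * snd p = L * (2 * (snd p / L))" using assms(2) by simp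
    then have "(2 * snd p) powr s = L powr s * (2 * (snd p / L)) powr s" by (metis powr_mult)
    then show ?thesis unfolding w_def \<phi>_def by (simp add: ennreal_mult)
  qed
  have "(\<Sum>\<^sub>\<infinity>p\<in>B. w p) = (\<Sum>\<^sub>\<infinity>p\<in>B. ennreal (L powr s) * w (\<phi> p))"
    by (rule infsum_cong) (rule scale)
  also have "\<dots> = ennreal (L powr s) * (\<Sum>\<^sub>\<infinity>p\<in>B. w (\<phi> p))"
    by (rule infsum_cmult_right_ennreal) simp
  also have "\<dots> = ennreal (L powr s) * (\<Sum>\<^sub>\<infinity>q\<in>\<phi> ` B. w q)"
    using infsum_reindex[OF preimage(1), of w] by (simp add: comp_def)
  also have "\<dots> \<le> ennreal (L powr s) * (SUP B \<in> Collect (delta_packing E (\<delta> / L)). \<Sum>\<^sub>\<infinity>q\<in>B. w q)"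
    using preimage(2) by (intro mult_left_mono SUP_upper) auto
  finally show "(\<Sum>\<^sub>\<infinity>p\<in>B. ennreal ((2 * snd p) powr s))
      \<le> ennreal (L powr s) * (SUP B \<in> Collect (delta_packing E (\<delta> / L)). \<Sum>\<^sub>\<infinity>p\<in>B. ennreal ((2 * snd p) powr s))"
    by (simp only: w_def)
qed

lemma packing_premeasure_mono: "E \<subseteq> E' \<Longrightarrow> packing_premeasure s E \<le> packing_premeasure s E'"
  unfolding packing_premeasure_def packing_pre_def by (intro INF_mono' SUP_subset_mono) auto

lemma packing_premeasure_lipschitz_image:
  assumes "L-lipschitz_on E g" "0 < L"
  shows "packing_premeasure s (g ` E) \<le> ennreal (L powr s) * packing_premeasure s E"
  unfolding packing_premeasure_def
proof (rule INF_le_cmult_INF)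
  fix \<delta> :: real assume "\<delta> \<in> {0<..}"
  then show "\<exists>\<delta>'\<in>{0<..}. packing_pre s \<delta>' (g ` E) \<le> ennreal (L powr s) * packing_pre s \<delta> E"
    using packing_pre_lipschitz_image[OF assms, of s "L * \<delta>"] assms(2) by (intro bexI[of _ "L * \<delta>"]) auto
qed (use assms(2) in simp)

lemma packing_measure_lipschitz_image_null:
  assumes "L-lipschitz_on F g" "packing_measure s F = 0"
  shows "packing_measure s (g ` F) = 0"
proof -
  define L' where "L' = max 1 L"
  have L': "L'-lipschitz_on F g" "0 < L'"
    using lipschitz_on_max_1[OF assms(1)] unfolding L'_def by auto
  have "packing_measure s (g ` F) \<le> ennreal (L' powr s) * packing_measure s F"
    unfolding packing_measure_def
  proof (rule INF_le_cmult_INF, clarify)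
    fix A :: "nat \<Rightarrow> pt set" assume A: "F \<subseteq> (\<Union>i. A i)"
    define B where "B i = g ` (A i \<inter> F)" for i
    have "packing_premeasure s (B i) \<le> ennreal (L' powr s) * packing_premeasure s (A i)" for i
    proof -
      have "packing_premeasure s (B i) \<le> ennreal (L' powr s) * packing_premeasure s (A i \<inter> F)"
        unfolding B_def using lipschitz_on_subset[OF L'(1)] L'(2)
        by (intro packing_premeasure_lipschitz_image) auto
      also have "\<dots> \<le> ennreal (L' powr s) * packing_premeasure s (A i)"
        by (intro mult_left_mono packing_premeasure_mono) auto
      finally show ?thesis .
    qed
    then have "(\<Sum>i. packing_premeasure s (B i)) \<le> (\<Sum>i. ennreal (L' powr s) * packing_premeasure s (A i))"
      by (intro suminf_le) auto
    then have "(\<Sum>i. packing_premeasure s (B i)) \<le> ennreal (L' powr s) * (\<Sum>i. packing_premeasure s (A i))"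
      by (simp add: ennreal_suminf_cmult)
    moreover have "g ` F \<subseteq> (\<Union>i. B i)" using A unfolding B_def by blast
    ultimately show "\<exists>B\<in>{A. g ` F \<subseteq> (\<Union>i. A i)}.
        (\<Sum>i. packing_premeasure s (B i)) \<le> ennreal (L' powr s) * (\<Sum>i. packing_premeasure s (A i))"
      by blast
  qed (use L'(2) in simp)
  then show ?thesis using assms(2) by simp
qed

lemma packing_dim_lipschitz_image_le:
  assumes "L-lipschitz_on F g"
  shows "packing_dim (g ` F) \<le> packing_dim F"
  unfolding packing_dim_def
  by (rule Inf_superset_mono) (use packing_measure_lipschitz_image_null[OF assms] in blast)

lemma assouad_dim_bi_lipschitz_image_le:
  assumes g: "L-lipschitz_on F g" and h: "K-lipschitz_on (g ` F) h"
    and hg: "\<And>x. x \<in> F \<Longrightarrow> h (g x) = x"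
  shows "assouad_dim (g ` F) \<le> assouad_dim F"
  unfolding assouad_dim_def
proof (rule Inf_superset_mono, rule image_mono, rule subsetI, clarify)
  fix \<alpha> C :: real
  assume \<alpha>: "0 \<le> \<alpha>" and C: "0 < C" and bound: "\<forall>r R x. 0 < r \<and> r < R \<and> x \<in> F \<longrightarrow>
      cover_num (ball x R \<inter> F) r \<le> ereal (C * (R / r) powr \<alpha>)"
  define L' where "L' = max 1 L"
  define K' where "K' = max 1 K"
  have L': "L'-lipschitz_on F g" "1 \<le> L'" using lipschitz_on_max_1[OF g] unfolding L'_def by auto
  have K': "K'-lipschitz_on (g ` F) h" "1 \<le> K'" using lipschitz_on_max_1[OF h] unfolding K'_def by auto
  have "cover_num (ball y R \<inter> g ` F) r \<le> ereal (C * (K' * L') powr \<alpha> * (R / r) powr \<alpha>)"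
    if r: "0 < r" "r < R" and y: "y \<in> g ` F" for r R y
  proof -
    obtain x where x: "x \<in> F" "y = g x" using y by blast
    have "ball y R \<inter> g ` F \<subseteq> g ` (ball x (K' * R) \<inter> F)"
    proof
      fix z assume "z \<in> ball y R \<inter> g ` F"
      then obtain w where w: "w \<in> F" "z = g w" "dist (g x) (g w) < R" using x by auto
      have "dist x w = dist (h (g x)) (h (g w))" using hg w(1) x(1) by simp
      also have "\<dots> \<le> K' * dist (g x) (g w)" using lipschitz_onD[OF K'(1)] w(1) x(1) by simp
      also have "\<dots> < K' * R" using w(3) K'(2) by simp
      finally show "z \<in> g ` (ball x (K' * R) \<inter> F)" using w by auto
    qed
    then have "cover_num (ball y R \<inter> g ` F) r \<le> cover_num (g ` (ball x (K' * R) \<inter> F)) (L' * (r / L'))"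
      using cover_num_mono L'(2) by simp
    also have "\<dots> \<le> cover_num (ball x (K' * R) \<inter> F) (r / L')"
      by (rule cover_num_lipschitz_image[OF L'(1)]) auto
    also have "\<dots> \<le> ereal (C * ((K' * R) / (r / L')) powr \<alpha>)"
    proof -
      have "r / L' \<le> r" "R \<le> K' * R" using r L'(2) K'(2) by (simp_all add: divide_le_eq)
      moreover have "0 < r / L'" using r L'(2) by simp
      ultimately have "r / L' < K' * R" "0 < r / L'" using r(2) by linarith+
      then show ?thesis using bound x(1) by blast
    qed
    also have "(K' * R) / (r / L') = (K' * L') * (R / r)" using L'(2) r by (simp add: field_simps)
    finally show ?thesis unfolding powr_mult mult.assoc .
  qed
  moreover have "0 < C * (K' * L') powr \<alpha>" using C K'(2) L'(2) by simp
  ultimately show "\<exists>C>0. \<forall>r R y. 0 < r \<and> r < R \<and> y \<in> g ` F \<longrightarrow>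
      cover_num (ball y R \<inter> g ` F) r \<le> ereal (C * (R / r) powr \<alpha>)"
    by blast
qed

lemma dims_lipschitz_inverse_eq:
  assumes "compact F" "L-lipschitz_on F g" "K-lipschitz_on (g ` F) h" "\<And>x. x \<in> F \<Longrightarrow> h (g x) = x"
  shows "upper_box_dim (g ` F) = upper_box_dim F
       \<and> lower_box_dim (g ` F) = lower_box_dim F
       \<and> packing_dim (g ` F) = packing_dim F
       \<and> hausdorff_dim (g ` F) = hausdorff_dim F
       \<and> assouad_dim (g ` F) = assouad_dim F"
proof -
  have hgF: "h ` g ` F = F" using assms(4) by (force simp: image_image)
  have g_lip: "L-lipschitz_on (h ` g ` F) g" and gh: "\<And>y. y \<in> g ` F \<Longrightarrow> g (h y) = y"
    using assms(2,4) hgF by auto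
  have "compact (g ` F)"
    by (intro compact_continuous_image lipschitz_on_continuous_on[OF assms(2)] assms(1))
  then have "upper_box_dim (h ` g ` F) \<le> upper_box_dim (g ` F)" "lower_box_dim (h ` g ` F) \<le> lower_box_dim (g ` F)"
    using box_dims_lipschitz_image_le[OF _ assms(3)] by auto
  moreover have "upper_box_dim (g ` F) \<le> upper_box_dim F" "lower_box_dim (g ` F) \<le> lower_box_dim F"
    using box_dims_lipschitz_image_le[OF assms(1,2)] by auto
  moreover note hausdorff_dim_lipschitz_image_le[OF assms(2)] hausdorff_dim_lipschitz_image_le[OF assms(3)]
    packing_dim_lipschitz_image_le[OF assms(2)] packing_dim_lipschitz_image_le[OF assms(3)]
    assouad_dim_bi_lipschitz_image_le[OF assms(2-4)] assouad_dim_bi_lipschitz_image_le[OF assms(3) g_lip gh]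
  ultimately show ?thesis unfolding hgF by (simp add: order.antisym)
qed

lemma dist_Pair_le_of_snd_le:
  fixes x x' a b c d L :: real
  assumes "\<bar>a - b\<bar> \<le> L * \<bar>c - d\<bar>" "1 \<le> L"
  shows "dist (x, a) (x', b) \<le> L * dist (x, c) (x', d)"
proof -
  have "(x - x')\<^sup>2 \<le> L\<^sup>2 * (x - x')\<^sup>2" using assms(2) by (simp add: mult_le_cancel_right1 one_le_power)
  moreover have "(a - b)\<^sup>2 \<le> L\<^sup>2 * (c - d)\<^sup>2"
    using power_mono[OF assms(1) abs_ge_zero, of 2] by (simp add: power_mult_distrib)
  ultimately have "sqrt ((x - x')\<^sup>2 + (a - b)\<^sup>2) \<le> sqrt (L\<^sup>2 * ((x - x')\<^sup>2 + (c - d)\<^sup>2))"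
    by (simp add: distrib_left)
  also have "\<dots> = L * sqrt ((x - x')\<^sup>2 + (c - d)\<^sup>2)" using assms(2) by (simp add: real_sqrt_mult)
  finally show ?thesis by (simp add: dist_Pair_Pair dist_real_def)
qed

lemma graph_map_lipschitz:
  assumes "\<And>x y. x \<in> {0..1} \<Longrightarrow> y \<in> {0..1} \<Longrightarrow> \<bar>g x - g y\<bar> \<le> L * \<bar>f x - f y\<bar>"
  shows "(max 1 L)-lipschitz_on (graph f) (\<lambda>p. (fst p, g (fst p)))"
proof (rule lipschitz_onI)
  fix p q assume "p \<in> graph f" "q \<in> graph f"
  then obtain x y where xy: "x \<in> {0..1}" "y \<in> {0..1}" "p = (x, f x)" "q = (y, f y)"
    unfolding graph_def by blast
  have "\<bar>g x - g y\<bar> \<le> L * \<bar>f x - f y\<bar>" using assms xy(1,2) .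
  also have "\<dots> \<le> max 1 L * \<bar>f x - f y\<bar>" by (intro mult_right_mono) auto
  finally show "dist (fst p, g (fst p)) (fst q, g (fst q)) \<le> max 1 L * dist p q"
    unfolding xy fst_conv by (rule dist_Pair_le_of_snd_le) simp
qed simp

lemma graph_map_image: "(\<lambda>p. (fst p, g (fst p))) ` graph f = graph g"
  unfolding graph_def by (simp add: image_image)

lemma graph_dims_eq:
  assumes "continuous_on {0..1} f"
    and "\<And>x y. x \<in> {0..1} \<Longrightarrow> y \<in> {0..1} \<Longrightarrow> \<bar>g x - g y\<bar> \<le> L * \<bar>f x - f y\<bar>"
    and "\<And>x y. x \<in> {0..1} \<Longrightarrow> y \<in> {0..1} \<Longrightarrow> \<bar>f x - f y\<bar> \<le> K * \<bar>g x - g y\<bar>"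
  shows "upper_box_dim (graph g) = upper_box_dim (graph f)
       \<and> lower_box_dim (graph g) = lower_box_dim (graph f)
       \<and> packing_dim (graph g) = packing_dim (graph f)
       \<and> hausdorff_dim (graph g) = hausdorff_dim (graph f)
       \<and> assouad_dim (graph g) = assouad_dim (graph f)"
proof -
  define \<Phi> where "\<Phi> = (\<lambda>p::pt. (fst p, g (fst p)))"
  define \<Psi> where "\<Psi> = (\<lambda>p::pt. (fst p, f (fst p)))"
  have image: "\<Phi> ` graph f = graph g" unfolding \<Phi>_def by (rule graph_map_image)
  have "compact (graph f)"
    unfolding graph_def by (intro compact_continuous_image continuous_intros assms(1)) simp
  moreover have "(max 1 L)-lipschitz_on (graph f) \<Phi>"
    unfolding \<Phi>_def using assms(2) by (rule graph_map_lipschitz)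
  moreover have "(max 1 K)-lipschitz_on (\<Phi> ` graph f) \<Psi>"
    unfolding image \<Psi>_def using assms(3) by (rule graph_map_lipschitz)
  moreover have "\<Psi> (\<Phi> p) = p" if "p \<in> graph f" for p
    using that unfolding \<Phi>_def \<Psi>_def graph_def by auto
  ultimately have "upper_box_dim (\<Phi> ` graph f) = upper_box_dim (graph f)
       \<and> lower_box_dim (\<Phi> ` graph f) = lower_box_dim (graph f)
       \<and> packing_dim (\<Phi> ` graph f) = packing_dim (graph f)
       \<and> hausdorff_dim (\<Phi> ` graph f) = hausdorff_dim (graph f)
       \<and> assouad_dim (\<Phi> ` graph f) = assouad_dim (graph f)"
    by (rule dims_lipschitz_inverse_eq)
  then show ?thesis unfolding image .
qed

lemma power_diff_bounds:
  fixes a b m M :: real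
  assumes "0 < m" "m \<le> a" "m \<le> b" "a \<le> M" "b \<le> M"
  shows "real n * m ^ (n - 1) * \<bar>a - b\<bar> \<le> \<bar>a ^ n - b ^ n\<bar>"
    and "\<bar>a ^ n - b ^ n\<bar> \<le> real n * M ^ (n - 1) * \<bar>a - b\<bar>"
proof -
  define S where "S = (\<Sum>i<n. b ^ (n - Suc i) * a ^ i)"
  have lower: "real n * m ^ (n - 1) \<le> S"
  proof -
    have "m ^ (n - 1) \<le> b ^ (n - Suc i) * a ^ i" if "i < n" for i
    proof -
      have "m ^ (n - 1) = m ^ (n - Suc i) * m ^ i" using that by (simp flip: power_add)
      also have "\<dots> \<le> b ^ (n - Suc i) * a ^ i" using assms by (intro mult_mono power_mono) auto
      finally show ?thesis .
    qed
    then show ?thesis unfolding S_def using sum_bounded_below[of "{..<n}" "m ^ (n - 1)"] by simp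
  qed
  have upper: "S \<le> real n * M ^ (n - 1)"
  proof -
    have "b ^ (n - Suc i) * a ^ i \<le> M ^ (n - 1)" if "i < n" for i
    proof -
      have "b ^ (n - Suc i) * a ^ i \<le> M ^ (n - Suc i) * M ^ i"
        using assms by (intro mult_mono power_mono) auto
      also have "\<dots> = M ^ (n - 1)" using that by (simp flip: power_add)
      finally show ?thesis .
    qed
    then show ?thesis unfolding S_def using sum_bounded_above[of "{..<n}" _ "M ^ (n - 1)"] by simp
  qed
  have "0 \<le> S" using lower assms(1) by (meson order_trans zero_le_power of_nat_0_le_iff mult_nonneg_nonneg less_imp_le)
  then have "\<bar>a ^ n - b ^ n\<bar> = S * \<bar>a - b\<bar>"
    unfolding S_def by (simp add: power_diff_sumr2 abs_mult)
  then show "real n * m ^ (n - 1) * \<bar>a - b\<bar> \<le> \<bar>a ^ n - b ^ n\<bar>"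
    and "\<bar>a ^ n - b ^ n\<bar> \<le> real n * M ^ (n - 1) * \<bar>a - b\<bar>"
    using mult_right_mono[OF lower abs_ge_zero] mult_right_mono[OF upper abs_ge_zero] by simp_all
qed

lemma abs_diff_abs_eq_if_same_sign:
  fixes x y :: real
  assumes "0 \<le> x * y"
  shows "\<bar>\<bar>x\<bar> - \<bar>y\<bar>\<bar> = \<bar>x - y\<bar>"
  using assms by (auto simp: abs_if zero_le_mult_iff)

lemma power_bi_lipschitz:
  fixes Y :: "real set"
  assumes "compact Y" "connected Y" "0 \<notin> Y" "1 \<le> n"
  obtains L K where "\<And>a b. a \<in> Y \<Longrightarrow> b \<in> Y \<Longrightarrow> \<bar>a ^ n - b ^ n\<bar> \<le> L * \<bar>a - b\<bar>"
    and "\<And>a b. a \<in> Y \<Longrightarrow> b \<in> Y \<Longrightarrow> \<bar>a - b\<bar> \<le> K * \<bar>a ^ n - b ^ n\<bar>"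
proof -
  obtain m where m: "0 < m" "\<And>y. y \<in> Y \<Longrightarrow> m \<le> \<bar>y\<bar>"
    using separate_point_closed[OF compact_imp_closed[OF assms(1)] assms(3)] by auto
  obtain M where M: "\<And>y. y \<in> Y \<Longrightarrow> \<bar>y\<bar> \<le> M"
    using compact_imp_bounded[OF assms(1)] by (auto simp: bounded_real)
  have same_sign: "0 \<le> a * b" if "a \<in> Y" "b \<in> Y" for a b
  proof (rule ccontr)
    assume "\<not> 0 \<le> a * b"
    then have "a \<le> 0 \<and> 0 \<le> b \<or> b \<le> 0 \<and> 0 \<le> a" by (auto simp: zero_le_mult_iff)
    moreover have "is_interval Y" using assms(2) by (simp add: is_interval_connected_1)
    ultimately have "0 \<in> Y" using that unfolding is_interval_1 by blast
    then show False using assms(3) by simp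
  qed
  have bounds: "real n * m ^ (n - 1) * \<bar>a - b\<bar> \<le> \<bar>a ^ n - b ^ n\<bar>"
    "\<bar>a ^ n - b ^ n\<bar> \<le> real n * M ^ (n - 1) * \<bar>a - b\<bar>" if "a \<in> Y" "b \<in> Y" for a b
  proof -
    have "0 \<le> a ^ n * b ^ n" using same_sign[OF that] by (simp flip: power_mult_distrib)
    then have pow: "\<bar>a ^ n - b ^ n\<bar> = \<bar>\<bar>a\<bar> ^ n - \<bar>b\<bar> ^ n\<bar>"
      using abs_diff_abs_eq_if_same_sign[of "a ^ n" "b ^ n"] by (simp add: power_abs)
    have diff: "\<bar>a - b\<bar> = \<bar>\<bar>a\<bar> - \<bar>b\<bar>\<bar>"
      using abs_diff_abs_eq_if_same_sign same_sign[OF that] by simp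
    have "m \<le> \<bar>a\<bar>" "m \<le> \<bar>b\<bar>" "\<bar>a\<bar> \<le> M" "\<bar>b\<bar> \<le> M" using m M that by auto
    then show "real n * m ^ (n - 1) * \<bar>a - b\<bar> \<le> \<bar>a ^ n - b ^ n\<bar>"
      "\<bar>a ^ n - b ^ n\<bar> \<le> real n * M ^ (n - 1) * \<bar>a - b\<bar>"
      unfolding pow diff by (rule power_diff_bounds[OF m(1)])+
  qed
  have "0 < real n * m ^ (n - 1)" using m(1) assms(4) by simp
  then have "\<bar>a - b\<bar> \<le> 1 / (real n * m ^ (n - 1)) * \<bar>a ^ n - b ^ n\<bar>" if "a \<in> Y" "b \<in> Y" for a b
    using bounds(1)[OF that] by (simp add: field_simps)
  with bounds(2) show ?thesis by (rule that)
qed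

theorem mainTheorem4:
  fixes f :: "real \<Rightarrow> real" and n :: nat
  assumes "continuous_on {0..1} f"
    and "\<forall>x\<in>{0..1}. f x \<noteq> 0"
    and "n \<ge> 1"
  shows "upper_box_dim (graph (\<lambda>x. f x ^ n)) = upper_box_dim (graph f)
       \<and> lower_box_dim (graph (\<lambda>x. f x ^ n)) = lower_box_dim (graph f)
       \<and> packing_dim (graph (\<lambda>x. f x ^ n)) = packing_dim (graph f)
       \<and> hausdorff_dim (graph (\<lambda>x. f x ^ n)) = hausdorff_dim (graph f)
       \<and> assouad_dim (graph (\<lambda>x. f x ^ n)) = assouad_dim (graph f)"
proof -
  have "compact (f ` {0..1})" using assms(1) by (intro compact_continuous_image) auto
  moreover have "connected (f ` {0..1})" using assms(1) by (intro connected_continuous_image) auto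
  moreover have "0 \<notin> f ` {0..1}" using assms(2) by auto
  ultimately obtain L K where
    L: "\<And>a b. a \<in> f ` {0..1} \<Longrightarrow> b \<in> f ` {0..1} \<Longrightarrow> \<bar>a ^ n - b ^ n\<bar> \<le> L * \<bar>a - b\<bar>" and
    K: "\<And>a b. a \<in> f ` {0..1} \<Longrightarrow> b \<in> f ` {0..1} \<Longrightarrow> \<bar>a - b\<bar> \<le> K * \<bar>a ^ n - b ^ n\<bar>"
    using power_bi_lipschitz[OF _ _ _ assms(3)] by blast
  show ?thesis by (rule graph_dims_eq[OF assms(1), of _ L K]) (simp_all add: L K)
qed

end
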